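(* Let $\mathcal{T}_1,\mathcal{T}_2$ be locally finite trees and let $\Lambda$ be a simple group which is a uniform lattice in $\mathrm{Aut}(\mathcal{T}_1)\times\mathrm{Aut}(\mathcal{T}_2)$, and suppose $\Lambda\cong F_n\ast_{F_m}F_n$ is an amalgamated free product of free groups along embeddings $i,j:F_m\to F_n$. Let $p$ be a prime and let $A=\mathbb{Z}_p\rtimes F_n$ for a non-trivial action of $F_n$ on $\mathbb{Z}_p=\mathbb{Z}/p\mathbb{Z}$. Let $\Gamma=A\ast_{F_m}A$ be the amalgamated free product along the compositions $\tilde i,\tilde j:F_m\to F_n\hookrightarrow A$ of $i,j$ with the inclusion. Then $\Gamma$ is not virtually torsion-free. *)

theory Defs
  imports "HOL-Algebra.Algebra" "HOL-Analysis.Analysis"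
begin

text \<open>A letter is a generator with a sign (True = generator, False = its inverse).\<close>

definition cancels :: "('x \<times> bool) \<Rightarrow> ('x \<times> bool) \<Rightarrow> bool" where
  "cancels a b \<longleftrightarrow> fst a = fst b \<and> snd a \<noteq> snd b"

definition push_letter :: "('x \<times> bool) \<Rightarrow> ('x \<times> bool) list \<Rightarrow> ('x \<times> bool) list" where
  "push_letter a w = (case w of [] \<Rightarrow> [a] | b # r \<Rightarrow> (if cancels a b then r else a # w))"

definition reduce :: "('x \<times> bool) list \<Rightarrow> ('x \<times> bool) list" where
  "reduce w = foldr push_letter w []"

definition reduced :: "('x \<times> bool) list \<Rightarrow> bool" where
  "reduced w \<longleftrightarrow> (\<forall>i. Suc i < length w \<longrightarrow> \<not> cancels (w ! i) (w ! Suc i))"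

definition free_group :: "'x set \<Rightarrow> ('x \<times> bool) list monoid" where
  "free_group S = \<lparr> carrier = {w. fst ` set w \<subseteq> S \<and> reduced w},
                    monoid.mult = (\<lambda>u v. reduce (u @ v)),
                    monoid.one = [] \<rparr>"

abbreviation F :: "nat \<Rightarrow> (nat \<times> bool) list monoid" where
  "F n \<equiv> free_group {0..<n}"

definition normal_closure :: "('a, 'b) monoid_scheme \<Rightarrow> 'a set \<Rightarrow> 'a set" where
  "normal_closure G R = generate G (\<Union>g\<in>carrier G. \<Union>r\<in>R. {g \<otimes>\<^bsub>G\<^esub> r \<otimes>\<^bsub>G\<^esub> inv\<^bsub>G\<^esub> g})"

text \<open>The amalgamated free product \<open>A *_C B\<close> along \<open>f : C \<rightarrow> A\<close>, \<open>g : C \<rightarrow> B\<close>: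
  the free group on the disjoint union of the carriers of A and B modulo the
  multiplication tables of A and B and the identifications \<open>f c = g c\<close>.\<close>
definition amalg_relators ::
  "('a, 'm) monoid_scheme \<Rightarrow> ('b, 'n) monoid_scheme \<Rightarrow> ('c, 'k) monoid_scheme
   \<Rightarrow> ('c \<Rightarrow> 'a) \<Rightarrow> ('c \<Rightarrow> 'b) \<Rightarrow> (('a + 'b) \<times> bool) list set" where
  "amalg_relators A B C f g =
     {reduce [(Inl x, True), (Inl y, True), (Inl (x \<otimes>\<^bsub>A\<^esub> y), False)] | x y. x \<in> carrier A \<and> y \<in> carrier A}
   \<union> {reduce [(Inr x, True), (Inr y, True), (Inr (x \<otimes>\<^bsub>B\<^esub> y), False)] | x y. x \<in> carrier B \<and> y \<in> carrier B}
   \<union> {reduce [(Inl (f c), True), (Inr (g c), False)] | c. c \<in> carrier C}"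

definition amalgamated_product ::
  "('a, 'm) monoid_scheme \<Rightarrow> ('b, 'n) monoid_scheme \<Rightarrow> ('c, 'k) monoid_scheme
   \<Rightarrow> ('c \<Rightarrow> 'a) \<Rightarrow> ('c \<Rightarrow> 'b) \<Rightarrow> (('a + 'b) \<times> bool) list set monoid" where
  "amalgamated_product A B C f g =
     free_group (carrier A <+> carrier B)
       Mod normal_closure (free_group (carrier A <+> carrier B)) (amalg_relators A B C f g)"

definition cyclic_group :: "nat \<Rightarrow> nat monoid" where
  "cyclic_group p = \<lparr> carrier = {0..<p}, monoid.mult = (\<lambda>a b. (a + b) mod p), monoid.one = 0 \<rparr>"

definition semidirect_product ::
  "('n, 'a) monoid_scheme \<Rightarrow> ('h, 'b) monoid_scheme \<Rightarrow> ('h \<Rightarrow> 'n \<Rightarrow> 'n) \<Rightarrow> ('n \<times> 'h) monoid" where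
  "semidirect_product N H \<phi> = \<lparr> carrier = carrier N \<times> carrier H,
      monoid.mult = (\<lambda>(n1, h1) (n2, h2). (n1 \<otimes>\<^bsub>N\<^esub> \<phi> h1 n2, h1 \<otimes>\<^bsub>H\<^esub> h2)),
      monoid.one = (\<one>\<^bsub>N\<^esub>, \<one>\<^bsub>H\<^esub>) \<rparr>"

text \<open>Library \<open>simple_group\<close> requires \<open>order G > 1\<close>, which fails for infinite groups
  (card of an infinite set is 0); hence our own definition.\<close>
definition simple_grp :: "('a, 'b) monoid_scheme \<Rightarrow> bool" where
  "simple_grp G \<longleftrightarrow> group G \<and> carrier G \<noteq> {\<one>\<^bsub>G\<^esub>} \<and>
     (\<forall>H. H \<lhd> G \<longrightarrow> H = carrier G \<or> H = {\<one>\<^bsub>G\<^esub>})"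

definition torsion_free :: "('a, 'b) monoid_scheme \<Rightarrow> 'a set \<Rightarrow> bool" where
  "torsion_free G H \<longleftrightarrow> (\<forall>x\<in>H. \<forall>k::nat. k > 0 \<longrightarrow> x [^]\<^bsub>G\<^esub> k = \<one>\<^bsub>G\<^esub> \<longrightarrow> x = \<one>\<^bsub>G\<^esub>)"

definition virtually_torsion_free :: "('a, 'b) monoid_scheme \<Rightarrow> bool" where
  "virtually_torsion_free G \<longleftrightarrow>
     (\<exists>H. subgroup H G \<and> finite (rcosets\<^bsub>G\<^esub> H) \<and> torsion_free G H)"

definition walk :: "('v \<Rightarrow> 'v \<Rightarrow> bool) \<Rightarrow> 'v list \<Rightarrow> bool" where
  "walk E xs \<longleftrightarrow> (\<forall>i. Suc i < length xs \<longrightarrow> E (xs ! i) (xs ! Suc i))"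

definition is_tree :: "'v set \<Rightarrow> ('v \<Rightarrow> 'v \<Rightarrow> bool) \<Rightarrow> bool" where
  "is_tree V E \<longleftrightarrow> V \<noteq> {}
     \<and> (\<forall>u v. E u v \<longrightarrow> u \<in> V \<and> v \<in> V)
     \<and> (\<forall>u v. E u v \<longrightarrow> E v u)
     \<and> (\<forall>v. \<not> E v v)
     \<and> (\<forall>u\<in>V. \<forall>v\<in>V. \<exists>xs. xs \<noteq> [] \<and> hd xs = u \<and> last xs = v \<and> walk E xs)
     \<and> \<not> (\<exists>xs. length xs \<ge> 3 \<and> distinct xs \<and> walk E xs \<and> E (last xs) (hd xs))"

definition locally_finite :: "'v set \<Rightarrow> ('v \<Rightarrow> 'v \<Rightarrow> bool) \<Rightarrow> bool" where
  "locally_finite V E \<longleftrightarrow> (\<forall>v\<in>V. finite {u. E v u})"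

definition tree_aut :: "'v set \<Rightarrow> ('v \<Rightarrow> 'v \<Rightarrow> bool) \<Rightarrow> ('v \<Rightarrow> 'v) monoid" where
  "tree_aut V E = (BijGroup V) \<lparr> carrier := {f \<in> Bij V. \<forall>u\<in>V. \<forall>v\<in>V. E u v \<longleftrightarrow> E (f u) (f v)} \<rparr>"

text \<open>The standard (permutation / pointwise convergence) topology on \<open>Aut(T)\<close>.\<close>
definition tree_aut_topology :: "'v set \<Rightarrow> ('v \<Rightarrow> 'v \<Rightarrow> bool) \<Rightarrow> ('v \<Rightarrow> 'v) topology" where
  "tree_aut_topology V E =
     subtopology (product_topology (\<lambda>_. discrete_topology V) V) (carrier (tree_aut V E))"

text \<open>A uniform lattice in a topological group: a discrete cocompact subgroup.
  Cocompactness is expressed as \<open>G = K L\<close> for a compact \<open>K\<close>.\<close>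
definition uniform_lattice :: "('a, 'b) monoid_scheme \<Rightarrow> 'a topology \<Rightarrow> 'a set \<Rightarrow> bool" where
  "uniform_lattice G \<tau> L \<longleftrightarrow> subgroup L G
     \<and> subtopology \<tau> L = discrete_topology L
     \<and> (\<exists>K. compactin \<tau> K \<and> K <#>\<^bsub>G\<^esub> L = carrier G)"

end

theory Submission
  imports Defs
begin

text \<open>
  Let \<open>H\<close> be a torsion-free subgroup of finite index in \<open>\<Gamma>\<close>. The embeddings \<open>h \<mapsto> (0, h)\<close> of
  \<open>F\<^sub>n\<close> into both copies of \<open>A\<close> induce a homomorphism \<open>\<psi> : \<Lambda> \<rightarrow> \<Gamma>\<close>. Followed by the action
  of \<open>\<Gamma>\<close> on the finitely many cosets of \<open>H\<close>, it maps the infinite simple group \<open>\<Lambda>\<close> to a finite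
  group, hence trivially; so \<open>\<psi>(\<Lambda>)\<close> lies in the normal core of \<open>H\<close>. If \<open>h \<in> F\<^sub>n\<close> moves
  \<open>x \<in> \<int>/p\<close>, the commutator of \<open>\<psi>(h)\<close> with the image of \<open>(x, 1)\<close> therefore lies in \<open>H\<close>. But
  it is the image of \<open>(\<phi>\<^sub>h(x) - x, 1)\<close>, an element of order \<open>p\<close>, and it is non-trivial because
  the factors of an amalgamated product embed into it.
\<close>

section \<open>Free groups\<close>

definition inv_letter :: "'x \<times> bool \<Rightarrow> 'x \<times> bool" where
  "inv_letter a = (fst a, \<not> snd a)"

lemma cancels_iff_inv_letter: "cancels a b \<longleftrightarrow> b = inv_letter a"
  by (cases a; cases b) (auto simp: cancels_def inv_letter_def)

lemma fst_inv_letter [simp]: "fst (inv_letter a) = fst a"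
  by (simp add: inv_letter_def)

lemma inv_letter_inv_letter [simp]: "inv_letter (inv_letter a) = a"
  by (simp add: inv_letter_def)

lemma reduce_Nil [simp]: "reduce [] = []"
  by (simp add: reduce_def)

lemma reduce_Cons: "reduce (a # w) = push_letter a (reduce w)"
  by (simp add: reduce_def)

lemma reduce_append: "reduce (u @ v) = foldr push_letter u (reduce v)"
  by (simp add: reduce_def)

lemma reduced_Nil [simp]: "reduced []"
  and reduced_singleton [simp]: "reduced [a]"
  by (auto simp: reduced_def)

lemma reduced_Cons_Cons: "reduced (a # b # w) \<longleftrightarrow> \<not> cancels a b \<and> reduced (b # w)"
  by (auto simp: reduced_def less_Suc_eq_0_disj)

lemma reduced_tl: "reduced (a # w) \<Longrightarrow> reduced w"
  by (cases w) (auto simp: reduced_Cons_Cons)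

lemma reduced_push_letter: "reduced w \<Longrightarrow> reduced (push_letter a w)"
  by (cases w) (auto simp: push_letter_def reduced_Cons_Cons dest: reduced_tl)

lemma reduced_foldr_push_letter: "reduced w \<Longrightarrow> reduced (foldr push_letter u w)"
  by (induction u) (auto intro: reduced_push_letter)

lemma reduced_reduce: "reduced (reduce w)"
  by (simp add: reduce_def reduced_foldr_push_letter)

lemma set_push_letter: "set (push_letter a w) \<subseteq> insert a (set w)"
  by (cases w) (auto simp: push_letter_def)

lemma set_reduce: "set (reduce w) \<subseteq> set w"
  by (induction w) (use set_push_letter in \<open>fastforce simp: reduce_Cons\<close>)+

lemma push_letter_reduced: "reduced (a # w) \<Longrightarrow> push_letter a w = a # w"
  by (cases w) (auto simp: push_letter_def reduced_Cons_Cons)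

lemma reduce_reduced: "reduced w \<Longrightarrow> reduce w = w"
  by (induction w) (simp_all add: reduce_Cons push_letter_reduced reduced_tl)

lemma push_letter_cancel: "reduced w \<Longrightarrow> push_letter a (push_letter (inv_letter a) w) = w"
  by (cases w rule: remdups_adj.cases)
    (auto simp: push_letter_def cancels_iff_inv_letter reduced_Cons_Cons)

lemma foldr_push_letter_push_letter:
  assumes "reduced w" "reduced r"
  shows "foldr push_letter (push_letter a w) r = push_letter a (foldr push_letter w r)"
proof (cases w)
  case (Cons b w')
  have "reduced (foldr push_letter w' r)"
    using assms Cons by (auto intro: reduced_foldr_push_letter dest: reduced_tl)
  then have "cancels a b \<Longrightarrow> push_letter a (push_letter b (foldr push_letter w' r)) = foldr push_letter w' r"
    by (simp add: cancels_iff_inv_letter push_letter_cancel)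
  then show ?thesis
    using Cons by (simp add: push_letter_def)
qed (simp add: push_letter_def)

lemma foldr_push_letter_reduce: "reduced r \<Longrightarrow> foldr push_letter (reduce u) r = foldr push_letter u r"
  by (induction u) (simp_all add: reduce_Cons foldr_push_letter_push_letter reduced_reduce)

lemma reduce_reduce_append: "reduce (reduce u @ v) = reduce (u @ v)"
  by (simp add: reduce_append foldr_push_letter_reduce reduced_reduce)

lemma reduce_append_reduce: "reduce (u @ reduce v) = reduce (u @ v)"
  by (simp add: reduce_append reduce_reduced reduced_reduce)

definition inv_word :: "('x \<times> bool) list \<Rightarrow> ('x \<times> bool) list" where
  "inv_word w = rev (map inv_letter w)"

lemma foldr_push_letter_inv_word:
  "reduced r \<Longrightarrow> foldr push_letter (inv_word w) (foldr push_letter w r) = r"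
  by (induction w)
    (simp_all add: inv_word_def push_letter_cancel[of _ "inv_letter _", simplified]
      reduced_foldr_push_letter)

lemma reduce_inv_word_append: "reduce (inv_word w @ w) = []"
  using foldr_push_letter_inv_word[of "[]" w] by (simp add: reduce_append reduce_def)

lemma fst_set_inv_word: "fst ` set (inv_word w) = fst ` set w"
  by (force simp: inv_word_def inv_letter_def image_iff)

lemma group_free_group: "group (free_group S)"
proof (rule groupI)
  fix x y assume "x \<in> carrier (free_group S)" "y \<in> carrier (free_group S)"
  then show "x \<otimes>\<^bsub>free_group S\<^esub> y \<in> carrier (free_group S)"
    using set_reduce[of "x @ y"] by (force simp: free_group_def reduced_reduce)
next
  fix x y z
  show "x \<otimes>\<^bsub>free_group S\<^esub> y \<otimes>\<^bsub>free_group S\<^esub> z = x \<otimes>\<^bsub>free_group S\<^esub> (y \<otimes>\<^bsub>free_group S\<^esub> z)"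
    by (simp add: free_group_def reduce_reduce_append reduce_append_reduce)
next
  fix x assume x: "x \<in> carrier (free_group S)"
  then show "\<one>\<^bsub>free_group S\<^esub> \<otimes>\<^bsub>free_group S\<^esub> x = x"
    by (simp add: free_group_def reduce_reduced)
  have "reduce (inv_word x) \<in> carrier (free_group S)"
    using x set_reduce[of "inv_word x"] fst_set_inv_word[of x]
    by (auto simp: free_group_def reduced_reduce)
  moreover have "reduce (inv_word x) \<otimes>\<^bsub>free_group S\<^esub> x = \<one>\<^bsub>free_group S\<^esub>"
    by (simp add: free_group_def reduce_reduce_append reduce_inv_word_append)
  ultimately show "\<exists>y\<in>carrier (free_group S). y \<otimes>\<^bsub>free_group S\<^esub> x = \<one>\<^bsub>free_group S\<^esub>"
    by blast
qed (simp add: free_group_def)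

lemma one_free_group [simp]: "\<one>\<^bsub>free_group S\<^esub> = []"
  by (simp add: free_group_def)

lemma infinite_free_group:
  assumes "s \<in> S" shows "infinite (carrier (free_group S))"
proof -
  have "inj (\<lambda>k. replicate k (s, True))"
    by (rule injI) simp
  moreover have "range (\<lambda>k. replicate k (s, True)) \<subseteq> carrier (free_group S)"
    using assms by (auto simp: free_group_def reduced_def cancels_def)
  ultimately show ?thesis
    using range_inj_infinite infinite_super by blast
qed

definition eval_letter :: "('a, 'b) monoid_scheme \<Rightarrow> ('x \<Rightarrow> 'a) \<Rightarrow> 'x \<times> bool \<Rightarrow> 'a" where
  "eval_letter G h a = (if snd a then h (fst a) else inv\<^bsub>G\<^esub> h (fst a))"

definition eval_word :: "('a, 'b) monoid_scheme \<Rightarrow> ('x \<Rightarrow> 'a) \<Rightarrow> ('x \<times> bool) list \<Rightarrow> 'a" where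
  "eval_word G h w = foldr (\<lambda>a x. eval_letter G h a \<otimes>\<^bsub>G\<^esub> x) w \<one>\<^bsub>G\<^esub>"

lemma eval_word_Nil [simp]: "eval_word G h [] = \<one>\<^bsub>G\<^esub>"
  by (simp add: eval_word_def)

lemma eval_word_Cons [simp]: "eval_word G h (a # w) = eval_letter G h a \<otimes>\<^bsub>G\<^esub> eval_word G h w"
  by (simp add: eval_word_def)

context group
begin

lemma eval_letter_closed: "h \<in> S \<rightarrow> carrier G \<Longrightarrow> fst a \<in> S \<Longrightarrow> eval_letter G h a \<in> carrier G"
  by (auto simp: eval_letter_def)

lemma eval_word_closed: "h \<in> S \<rightarrow> carrier G \<Longrightarrow> fst ` set w \<subseteq> S \<Longrightarrow> eval_word G h w \<in> carrier G"
  by (induction w) (auto simp: eval_letter_closed)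

lemma eval_word_push_letter:
  assumes h: "h \<in> S \<rightarrow> carrier G" and a: "fst a \<in> S" and w: "fst ` set w \<subseteq> S"
  shows "eval_word G h (push_letter a w) = eval_letter G h a \<otimes> eval_word G h w"
proof (cases w)
  case (Cons b r)
  show ?thesis
  proof (cases "b = inv_letter a")
    case True
    have "h (fst a) \<in> carrier G"
      using h a by auto
    then have "eval_letter G h a \<otimes> eval_letter G h b = \<one>"
      using True by (cases a) (auto simp: eval_letter_def inv_letter_def)
    then show ?thesis
      using Cons True h a w
      by (simp add: push_letter_def cancels_iff_inv_letter eval_letter_closed eval_word_closed
          flip: m_assoc)
  qed (simp add: Cons push_letter_def cancels_iff_inv_letter)
qed (simp add: push_letter_def)

lemma eval_word_reduce: "h \<in> S \<rightarrow> carrier G \<Longrightarrow> fst ` set w \<subseteq> S \<Longrightarrow> eval_word G h (reduce w) = eval_word G h w"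
proof (induction w)
  case (Cons a w)
  have "fst ` set (reduce w) \<subseteq> S"
    using Cons.prems set_reduce[of w] by auto
  with Cons show ?case
    by (simp add: reduce_Cons eval_word_push_letter)
qed simp

lemma eval_word_append:
  "h \<in> S \<rightarrow> carrier G \<Longrightarrow> fst ` set u \<subseteq> S \<Longrightarrow> fst ` set v \<subseteq> S \<Longrightarrow>
    eval_word G h (u @ v) = eval_word G h u \<otimes> eval_word G h v"
  by (induction u) (auto simp: m_assoc eval_letter_closed eval_word_closed)

lemma eval_word_hom:
  assumes "h \<in> S \<rightarrow> carrier G" shows "eval_word G h \<in> hom (free_group S) G"
proof (rule homI)
  fix x y assume "x \<in> carrier (free_group S)" "y \<in> carrier (free_group S)"
  then have "fst ` set x \<subseteq> S" "fst ` set y \<subseteq> S"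
    by (simp_all add: free_group_def)
  then show "eval_word G h (x \<otimes>\<^bsub>free_group S\<^esub> y) = eval_word G h x \<otimes> eval_word G h y"
    using assms by (simp add: free_group_def eval_word_reduce eval_word_append image_Un)
qed (use assms in \<open>simp add: free_group_def eval_word_closed\<close>)

end

section \<open>Normal closures, coset actions and simple groups\<close>

context group
begin

lemma normal_closure_normal:
  assumes "R \<subseteq> carrier G" shows "normal_closure G R \<lhd> G"
  unfolding normal_closure_def
proof (rule normal_generateI)
  fix x y
  assume "x \<in> (\<Union>g\<in>carrier G. \<Union>r\<in>R. {g \<otimes> r \<otimes> inv g})" and y: "y \<in> carrier G"
  then obtain g r where g: "g \<in> carrier G" and r: "r \<in> R" and x: "x = g \<otimes> r \<otimes> inv g"
    by blast
  have "y \<otimes> x \<otimes> inv y = (y \<otimes> g) \<otimes> r \<otimes> inv (y \<otimes> g)"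
    using assms g r x y by (auto simp: m_assoc inv_mult_group)
  then show "y \<otimes> x \<otimes> inv y \<in> (\<Union>g\<in>carrier G. \<Union>r\<in>R. {g \<otimes> r \<otimes> inv g})"
    using g r y by blast
qed (use assms in auto)

lemma subset_normal_closure:
  assumes "R \<subseteq> carrier G" shows "R \<subseteq> normal_closure G R"
proof
  fix r assume "r \<in> R"
  then have "r = \<one> \<otimes> r \<otimes> inv \<one>" and "\<one> \<in> carrier G"
    using assms by auto
  with \<open>r \<in> R\<close> show "r \<in> normal_closure G R"
    unfolding normal_closure_def by (blast intro: generate.incl)
qed

end

lemma (in group_hom) normal_closure_subset_kernel:
  assumes "R \<subseteq> carrier G" and "\<And>r. r \<in> R \<Longrightarrow> h r = \<one>\<^bsub>H\<^esub>"
  shows "normal_closure G R \<subseteq> kernel G H h"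
  unfolding normal_closure_def
proof (rule G.generate_subgroup_incl[OF _ subgroup_kernel])
  show "(\<Union>g\<in>carrier G. \<Union>r\<in>R. {g \<otimes> r \<otimes> inv g}) \<subseteq> kernel G H h"
    using assms by (auto simp: kernel_def)
qed

lemma (in group) restrict_action_hom:
  assumes closed: "\<And>a x. a \<in> carrier G \<Longrightarrow> x \<in> E \<Longrightarrow> act a x \<in> E"
    and mult: "\<And>a b x. a \<in> carrier G \<Longrightarrow> b \<in> carrier G \<Longrightarrow> x \<in> E \<Longrightarrow>
                 act (a \<otimes> b) x = act a (act b x)"
    and one: "\<And>x. x \<in> E \<Longrightarrow> act \<one> x = x"
  shows "(\<lambda>a. restrict (act a) E) \<in> hom G (BijGroup E)"
proof -
  have bij: "restrict (act a) E \<in> Bij E" if a: "a \<in> carrier G" for a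
  proof -
    have "bij_betw (act a) E E"
    proof (rule bij_betwI[where g = "act (inv a)"])
      show "act (inv a) (act a x) = x" and "act a (act (inv a) x) = x" if "x \<in> E" for x
        using a that mult[of "inv a" a x] mult[of a "inv a" x] one by auto
    qed (use a closed in auto)
    then show ?thesis
      by (simp add: Bij_def)
  qed
  show ?thesis
  proof (rule homI)
    fix a b assume "a \<in> carrier G" "b \<in> carrier G"
    then show "restrict (act (a \<otimes> b)) E = restrict (act a) E \<otimes>\<^bsub>BijGroup E\<^esub> restrict (act b) E"
      using bij closed mult by (auto simp: BijGroup_def compose_def)
  qed (use bij in \<open>simp add: BijGroup_def\<close>)
qed

lemma finite_carrier_BijGroup:
  assumes "finite E" shows "finite (carrier (BijGroup E))"
proof (rule finite_subset)
  show "carrier (BijGroup E) \<subseteq> E \<rightarrow>\<^sub>E E"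
    by (auto simp: BijGroup_def Bij_def bij_betw_def PiE_def)
  show "finite (E \<rightarrow>\<^sub>E E)"
    using assms by (simp add: finite_PiE)
qed

definition coset_action :: "('a, 'b) monoid_scheme \<Rightarrow> 'a set \<Rightarrow> 'a \<Rightarrow> 'a set \<Rightarrow> 'a set" where
  "coset_action G H g = (\<lambda>Y \<in> rcosets\<^bsub>G\<^esub> H. Y #>\<^bsub>G\<^esub> inv\<^bsub>G\<^esub> g)"

context group
begin

lemma coset_action_hom:
  assumes H: "subgroup H G" shows "coset_action G H \<in> hom G (BijGroup (rcosets H))"
  unfolding coset_action_def
proof (rule restrict_action_hom)
  fix a Y assume a: "a \<in> carrier G" and "Y \<in> rcosets H"
  then obtain x where x: "x \<in> carrier G" and Y: "Y = H #> x"
    by (auto simp: RCOSETS_def)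
  then have "Y #> inv a = H #> (x \<otimes> inv a)"
    using H a by (simp add: coset_mult_assoc subgroup.subset)
  then show "Y #> inv a \<in> rcosets H"
    using H a x by (simp add: rcosetsI subgroup.subset)
next
  fix a b Y assume "a \<in> carrier G" "b \<in> carrier G" "Y \<in> rcosets H"
  moreover have "Y \<subseteq> carrier G"
    using subgroup.rcosets_carrier[OF H is_group \<open>Y \<in> rcosets H\<close>] .
  ultimately show "Y #> inv (a \<otimes> b) = Y #> inv b #> inv a"
    by (simp add: inv_mult_group coset_mult_assoc)
next
  fix Y assume "Y \<in> rcosets H"
  then have "Y \<subseteq> carrier G"
    using subgroup.rcosets_carrier[OF H is_group] by blast
  then show "Y #> inv \<one> = Y"
    by simp
qed

lemma kernel_coset_action_subset:
  assumes H: "subgroup H G" shows "kernel G (BijGroup (rcosets H)) (coset_action G H) \<subseteq> H"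
proof
  fix g assume "g \<in> kernel G (BijGroup (rcosets H)) (coset_action G H)"
  then have g: "g \<in> carrier G" and "coset_action G H g = (\<lambda>Y \<in> rcosets H. Y)"
    by (auto simp: kernel_def BijGroup_def)
  moreover have "H \<in> rcosets H"
    using subgroup.subgroup_in_rcosets[OF H is_group] .
  ultimately have "H #> inv g = H"
    unfolding coset_action_def by (metis restrict_apply')
  then have "inv g \<in> H"
    using rcos_self[OF inv_closed[OF g] H] by simp
  then show "g \<in> H"
    using H g by (metis inv_inv subgroup.m_inv_closed)
qed

end

lemma simple_grp_kernel_eq_carrier:
  assumes simple: "simple_grp G" and inf: "infinite (carrier G)"
    and h: "group_hom G K h" and fin: "finite (carrier K)"
  shows "kernel G K h = carrier G"
proof -
  interpret group_hom G K h by (rule h)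
  have "kernel G K h \<noteq> {\<one>\<^bsub>G\<^esub>}"
  proof
    assume "kernel G K h = {\<one>\<^bsub>G\<^esub>}"
    then have "inj_on h (carrier G)"
      by (simp add: inj_iff_trivial_ker)
    moreover have "h ` carrier G \<subseteq> carrier K"
      by auto
    ultimately show False
      using inf fin by (metis finite_imageD finite_subset)
  qed
  then show ?thesis
    using simple normal_kernel by (auto simp: simple_grp_def)
qed

text \<open>An infinite simple group mapping to \<open>G\<close> lands in the kernel of the action of \<open>G\<close> on the
  finitely many cosets of \<open>H\<close>, a normal subgroup contained in \<open>H\<close>.\<close>
lemma (in group) commutator_mem_finite_index_subgroup:
  assumes H: "subgroup H G" "finite (rcosets H)"
    and \<Lambda>: "simple_grp \<Lambda>" "infinite (carrier \<Lambda>)" and \<psi>: "\<psi> \<in> hom \<Lambda> G"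
    and l: "l \<in> carrier \<Lambda>" and y: "y \<in> carrier G"
  shows "\<psi> l \<otimes> y \<otimes> inv (\<psi> l) \<otimes> inv y \<in> H"
proof -
  let ?\<theta> = "coset_action G H" and ?Sym = "BijGroup (rcosets H)"
  interpret \<theta>: group_hom G ?Sym ?\<theta>
    by (simp add: group_hom_def group_hom_axioms_def is_group group_BijGroup coset_action_hom H)
  have "group_hom \<Lambda> ?Sym (?\<theta> \<circ> \<psi>)"
    using \<Lambda>(1) Group.hom_compose[OF \<psi> coset_action_hom[OF H(1)]] group_BijGroup
    by (simp add: group_hom_def group_hom_axioms_def simple_grp_def)
  then have "kernel \<Lambda> ?Sym (?\<theta> \<circ> \<psi>) = carrier \<Lambda>"
    using simple_grp_kernel_eq_carrier \<Lambda> H(2) finite_carrier_BijGroup by blast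
  then have core: "\<psi> l \<in> kernel G ?Sym ?\<theta>"
    using l hom_in_carrier[OF \<psi> l] by (auto simp: kernel_def)
  have "y \<otimes> inv (\<psi> l) \<otimes> inv y \<in> kernel G ?Sym ?\<theta>"
    using core y \<theta>.normal_kernel
    by (simp add: normal.inv_op_closed2 subgroup.m_inv_closed \<theta>.subgroup_kernel)
  with core have "\<psi> l \<otimes> (y \<otimes> inv (\<psi> l) \<otimes> inv y) \<in> kernel G ?Sym ?\<theta>"
    by (simp add: subgroup.m_closed \<theta>.subgroup_kernel)
  then show ?thesis
    using kernel_coset_action_subset[OF H(1)] hom_in_carrier[OF \<psi> l] y by (auto simp: m_assoc)
qed

section \<open>Amalgamated products\<close>

definition amalg_inl ::
  "('a, 'm) monoid_scheme \<Rightarrow> ('b, 'n) monoid_scheme \<Rightarrow> ('c, 'k) monoid_scheme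
   \<Rightarrow> ('c \<Rightarrow> 'a) \<Rightarrow> ('c \<Rightarrow> 'b) \<Rightarrow> 'a \<Rightarrow> (('a + 'b) \<times> bool) list set" where
  "amalg_inl A B C f g a =
     normal_closure (free_group (carrier A <+> carrier B)) (amalg_relators A B C f g)
       #>\<^bsub>free_group (carrier A <+> carrier B)\<^esub> [(Inl a, True)]"

definition amalg_inr ::
  "('a, 'm) monoid_scheme \<Rightarrow> ('b, 'n) monoid_scheme \<Rightarrow> ('c, 'k) monoid_scheme
   \<Rightarrow> ('c \<Rightarrow> 'a) \<Rightarrow> ('c \<Rightarrow> 'b) \<Rightarrow> 'b \<Rightarrow> (('a + 'b) \<times> bool) list set" where
  "amalg_inr A B C f g b =
     normal_closure (free_group (carrier A <+> carrier B)) (amalg_relators A B C f g)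
       #>\<^bsub>free_group (carrier A <+> carrier B)\<^esub> [(Inr b, True)]"

lemma Inl_in_Plus_iff [simp]: "Inl a \<in> A <+> B \<longleftrightarrow> a \<in> A"
  and Inr_in_Plus_iff [simp]: "Inr b \<in> A <+> B \<longleftrightarrow> b \<in> B"
  by auto

locale amalgam = A: group A + B: group B
  for A :: "('a, 'm) monoid_scheme" (structure) and B :: "('b, 'n) monoid_scheme"
    and C :: "('c, 'k) monoid_scheme" and f g +
  assumes f_closed: "f \<in> carrier C \<rightarrow> carrier A" and g_closed: "g \<in> carrier C \<rightarrow> carrier B"
begin

abbreviation "FG \<equiv> free_group (carrier A <+> carrier B)"
abbreviation "NC \<equiv> normal_closure FG (amalg_relators A B C f g)"
abbreviation "AP \<equiv> amalgamated_product A B C f g"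

sublocale FG: group FG
  by (rule group_free_group)

lemma letter_closed: "x \<in> carrier A <+> carrier B \<Longrightarrow> [(x, b)] \<in> carrier FG"
  by (simp add: free_group_def)

lemma reduce_closed: "fst ` set w \<subseteq> carrier A <+> carrier B \<Longrightarrow> reduce w \<in> carrier FG"
  using set_reduce[of w] by (force simp: free_group_def reduced_reduce)

lemma relators_closed: "amalg_relators A B C f g \<subseteq> carrier FG"
  using f_closed g_closed unfolding amalg_relators_def by (auto intro!: reduce_closed)

sublocale NC: normal NC FG
  by (rule FG.normal_closure_normal[OF relators_closed])

lemma group_amalgamated_product: "group AP"
  unfolding amalgamated_product_def by (rule NC.factorgroup_is_group)

lemma inv_free_group_letter: "x \<in> carrier A <+> carrier B \<Longrightarrow> inv\<^bsub>FG\<^esub> [(x, True)] = [(x, False)]"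
  by (rule FG.inv_equality) (auto simp: free_group_def reduce_Cons push_letter_def cancels_def)

lemma NC_rcos_eqI:
  assumes w: "w \<in> carrier FG" and v: "v \<in> carrier FG" and wv: "w \<otimes>\<^bsub>FG\<^esub> inv\<^bsub>FG\<^esub> v \<in> NC"
  shows "NC #>\<^bsub>FG\<^esub> w = NC #>\<^bsub>FG\<^esub> v"
  using FG.repr_independence[OF NC.rcos_module_rev[OF FG.is_group v w wv] v NC.subgroup_axioms]
  by simp

lemma rcos_letter_mult:
  assumes x: "x \<in> carrier A <+> carrier B" and y: "y \<in> carrier A <+> carrier B"
    and z: "z \<in> carrier A <+> carrier B"
    and rel: "reduce [(x, True), (y, True), (z, False)] \<in> amalg_relators A B C f g"
  shows "(NC #>\<^bsub>FG\<^esub> [(x, True)]) \<otimes>\<^bsub>AP\<^esub> (NC #>\<^bsub>FG\<^esub> [(y, True)]) = NC #>\<^bsub>FG\<^esub> [(z, True)]"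
proof -
  have "[(x, True)] \<otimes>\<^bsub>FG\<^esub> [(y, True)] \<otimes>\<^bsub>FG\<^esub> inv\<^bsub>FG\<^esub> [(z, True)]
      = reduce [(x, True), (y, True), (z, False)]"
    using z by (subst inv_free_group_letter) (simp_all add: free_group_def reduce_reduce_append del: reduce_append)
  then have "[(x, True)] \<otimes>\<^bsub>FG\<^esub> [(y, True)] \<otimes>\<^bsub>FG\<^esub> inv\<^bsub>FG\<^esub> [(z, True)] \<in> NC"
    using rel FG.subset_normal_closure[OF relators_closed] by auto
  then have "NC #>\<^bsub>FG\<^esub> ([(x, True)] \<otimes>\<^bsub>FG\<^esub> [(y, True)]) = NC #>\<^bsub>FG\<^esub> [(z, True)]"
    using x y z letter_closed by (intro NC_rcos_eqI) auto
  then show ?thesis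
    using x y letter_closed by (simp add: amalgamated_product_def FactGroup_def NC.rcos_sum)
qed

lemma amalg_inl_hom: "amalg_inl A B C f g \<in> hom A AP"
proof (rule homI)
  fix a assume "a \<in> carrier A"
  then show "amalg_inl A B C f g a \<in> carrier AP"
    using letter_closed
    by (auto simp: amalg_inl_def amalgamated_product_def FactGroup_def RCOSETS_def)
next
  fix a b assume "a \<in> carrier A" "b \<in> carrier A"
  moreover have "reduce [(Inl a, True), (Inl b, True), (Inl (a \<otimes> b), False)] \<in> amalg_relators A B C f g"
    if "a \<in> carrier A" "b \<in> carrier A" for a b
    using that unfolding amalg_relators_def by blast
  ultimately show "amalg_inl A B C f g (a \<otimes> b) = amalg_inl A B C f g a \<otimes>\<^bsub>AP\<^esub> amalg_inl A B C f g b"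
    unfolding amalg_inl_def by (intro rcos_letter_mult[symmetric]) simp_all
qed

lemma amalg_inr_hom: "amalg_inr A B C f g \<in> hom B AP"
proof (rule homI)
  fix b assume "b \<in> carrier B"
  then show "amalg_inr A B C f g b \<in> carrier AP"
    using letter_closed
    by (auto simp: amalg_inr_def amalgamated_product_def FactGroup_def RCOSETS_def)
next
  fix a b assume "a \<in> carrier B" "b \<in> carrier B"
  moreover have "reduce [(Inr a, True), (Inr b, True), (Inr (a \<otimes>\<^bsub>B\<^esub> b), False)] \<in> amalg_relators A B C f g"
    if "a \<in> carrier B" "b \<in> carrier B" for a b
    using that unfolding amalg_relators_def by blast
  ultimately show "amalg_inr A B C f g (a \<otimes>\<^bsub>B\<^esub> b) = amalg_inr A B C f g a \<otimes>\<^bsub>AP\<^esub> amalg_inr A B C f g b"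
    unfolding amalg_inr_def by (intro rcos_letter_mult[symmetric]) simp_all
qed

lemma amalg_inl_inr: "c \<in> carrier C \<Longrightarrow> amalg_inl A B C f g (f c) = amalg_inr A B C f g (g c)"
proof -
  assume c: "c \<in> carrier C"
  then have fc: "Inl (f c) \<in> carrier A <+> carrier B" and gc: "Inr (g c) \<in> carrier A <+> carrier B"
    using f_closed g_closed by auto
  have "[(Inl (f c), True)] \<otimes>\<^bsub>FG\<^esub> inv\<^bsub>FG\<^esub> [(Inr (g c), True)] = reduce [(Inl (f c), True), (Inr (g c), False)]"
    using gc by (subst inv_free_group_letter) (simp_all add: free_group_def)
  also have "\<dots> \<in> NC"
    using c FG.subset_normal_closure[OF relators_closed] unfolding amalg_relators_def by blast
  finally show ?thesis
    unfolding amalg_inl_def amalg_inr_def using fc gc letter_closed by (intro NC_rcos_eqI) auto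
qed

lemma eval_word_relator:
  assumes K: "group K" and \<alpha>: "\<alpha> \<in> hom A K" and \<beta>: "\<beta> \<in> hom B K"
    and compat: "\<And>c. c \<in> carrier C \<Longrightarrow> \<alpha> (f c) = \<beta> (g c)"
    and r: "r \<in> amalg_relators A B C f g"
  shows "eval_word K (case_sum \<alpha> \<beta>) r = \<one>\<^bsub>K\<^esub>"
proof -
  interpret K: group K by (rule K)
  have h: "case_sum \<alpha> \<beta> \<in> carrier A <+> carrier B \<rightarrow> carrier K"
    using \<alpha> \<beta> by (auto simp: hom_def)
  have eval_reduce: "eval_word K (case_sum \<alpha> \<beta>) (reduce w) = eval_word K (case_sum \<alpha> \<beta>) w"
    if "fst ` set w \<subseteq> carrier A <+> carrier B" for w
    using K.eval_word_reduce[OF h that] .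
  from r consider
    (A) x y where "x \<in> carrier A" "y \<in> carrier A"
      "r = reduce [(Inl x, True), (Inl y, True), (Inl (x \<otimes> y), False)]"
  | (B) x y where "x \<in> carrier B" "y \<in> carrier B"
      "r = reduce [(Inr x, True), (Inr y, True), (Inr (x \<otimes>\<^bsub>B\<^esub> y), False)]"
  | (C) c where "c \<in> carrier C" "r = reduce [(Inl (f c), True), (Inr (g c), False)]"
    unfolding amalg_relators_def by blast
  then show ?thesis
  proof cases
    case A
    then show ?thesis
      using hom_in_carrier[OF \<alpha>]
      by (simp add: eval_reduce eval_letter_def hom_mult[OF \<alpha>] flip: K.m_assoc)
  next
    case B
    then show ?thesis
      using hom_in_carrier[OF \<beta>]
      by (simp add: eval_reduce eval_letter_def hom_mult[OF \<beta>] flip: K.m_assoc)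
  next
    case C
    then have "f c \<in> carrier A" "g c \<in> carrier B"
      using f_closed g_closed by auto
    with C show ?thesis
      using hom_in_carrier[OF \<beta>] by (simp add: eval_reduce eval_letter_def compat)
  qed
qed

lemma amalgamated_product_lift:
  assumes K: "group K" and \<alpha>: "\<alpha> \<in> hom A K" and \<beta>: "\<beta> \<in> hom B K"
    and compat: "\<And>c. c \<in> carrier C \<Longrightarrow> \<alpha> (f c) = \<beta> (g c)"
  obtains \<psi> where "\<psi> \<in> hom AP K"
    and "\<And>a. a \<in> carrier A \<Longrightarrow> \<psi> (amalg_inl A B C f g a) = \<alpha> a"
    and "\<And>b. b \<in> carrier B \<Longrightarrow> \<psi> (amalg_inr A B C f g b) = \<beta> b"
proof -
  let ?E = "eval_word K (case_sum \<alpha> \<beta>)"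
  have h: "case_sum \<alpha> \<beta> \<in> carrier A <+> carrier B \<rightarrow> carrier K"
    using \<alpha> \<beta> by (auto simp: hom_def)
  interpret E: group_hom FG K ?E
    using group.eval_word_hom[OF K h] by (simp add: group_hom_def group_hom_axioms_def FG.is_group K)
  have "NC \<subseteq> kernel FG K ?E"
    using eval_word_relator[OF K \<alpha> \<beta> compat] by (intro E.normal_closure_subset_kernel[OF relators_closed])
  then obtain \<psi> where \<psi>: "\<psi> \<in> hom AP K"
    and \<psi>_rcos: "\<And>w. w \<in> carrier FG \<Longrightarrow> \<psi> (NC #>\<^bsub>FG\<^esub> w) = ?E w"
    using E.FactGroup_universal_kernel[OF NC.normal_axioms] unfolding amalgamated_product_def by blast
  show ?thesis
  proof (rule that[OF \<psi>])
    show "\<psi> (amalg_inl A B C f g a) = \<alpha> a" if "a \<in> carrier A" for a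
      using that \<psi>_rcos[of "[(Inl a, True)]"] letter_closed hom_in_carrier[OF \<alpha>] K
      by (simp add: amalg_inl_def eval_letter_def)
    show "\<psi> (amalg_inr A B C f g b) = \<beta> b" if "b \<in> carrier B" for b
      using that \<psi>_rcos[of "[(Inr b, True)]"] letter_closed hom_in_carrier[OF \<beta>] K
      by (simp add: amalg_inr_def eval_letter_def)
  qed
qed

lemma amalgamated_product_map:
  assumes "amalgam A' B' C f' g'" and e1: "e1 \<in> hom A A'" and e2: "e2 \<in> hom B B'"
    and f': "\<And>c. c \<in> carrier C \<Longrightarrow> f' c = e1 (f c)" and g': "\<And>c. c \<in> carrier C \<Longrightarrow> g' c = e2 (g c)"
  obtains \<psi> where "\<psi> \<in> hom AP (amalgamated_product A' B' C f' g')"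
    and "\<And>a. a \<in> carrier A \<Longrightarrow> \<psi> (amalg_inl A B C f g a) = amalg_inl A' B' C f' g' (e1 a)"
proof -
  interpret A': amalgam A' B' C f' g' by (rule assms(1))
  have compat: "(amalg_inl A' B' C f' g' \<circ> e1) (f c) = (amalg_inr A' B' C f' g' \<circ> e2) (g c)"
    if "c \<in> carrier C" for c
    using that A'.amalg_inl_inr f' g' by simp
  show ?thesis
  proof (rule amalgamated_product_lift[OF A'.group_amalgamated_product
        Group.hom_compose[OF e1 A'.amalg_inl_hom] Group.hom_compose[OF e2 A'.amalg_inr_hom] compat])
    fix \<psi> assume "\<psi> \<in> hom AP (amalgamated_product A' B' C f' g')"
      and "\<And>a. a \<in> carrier A \<Longrightarrow> \<psi> (amalg_inl A B C f g a) = (amalg_inl A' B' C f' g' \<circ> e1) a"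
    then show thesis
      using that by simp
  qed
qed

end

text \<open>Writing \<open>H = f(C)\<close>, every \<open>a \<in> A\<close> is uniquely \<open>f c \<otimes> r\<close> with \<open>r\<close> the chosen representative of
  \<open>H #> a\<close>. Thus \<open>coords\<close> and \<open>point\<close> are inverse bijections between \<open>A\<close> and \<open>C \<times> A/H\<close>, and
  \<open>shift\<close> is left multiplication transported along them; elements of \<open>H\<close> only change the first
  coordinate.\<close>
locale subgroup_embedding = A: group A + C: group C
  for A :: "('a, 'm) monoid_scheme" (structure) and C :: "('c, 'k) monoid_scheme" and f +
  assumes f_hom: "f \<in> hom C A" and f_inj: "inj_on f (carrier C)"
begin

abbreviation "H \<equiv> f ` carrier C"

lemma subgroup_image: "subgroup H A"
  using group_hom.img_is_subgroup[of C A f] f_hom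
  by (simp add: group_hom_def group_hom_axioms_def A.is_group C.is_group)

lemma f_closed: "c \<in> carrier C \<Longrightarrow> f c \<in> carrier A"
  using f_hom by (rule hom_in_carrier)

lemma image_subset: "H \<subseteq> carrier A"
  using f_closed by blast

lemma rcos_in_rcosets: "a \<in> carrier A \<Longrightarrow> H #> a \<in> rcosets H"
  by (simp add: A.rcosetsI image_subset)

definition coset_rep :: "'a set \<Rightarrow> 'a" where
  "coset_rep Y = (SOME a. a \<in> Y)"

definition coords :: "'a \<Rightarrow> 'c \<times> 'a set" where
  "coords a = (inv_into (carrier C) f (a \<otimes> inv (coset_rep (H #> a))), H #> a)"

definition point :: "'c \<times> 'a set \<Rightarrow> 'a" where
  "point y = f (fst y) \<otimes> coset_rep (snd y)"

definition shift :: "'a \<Rightarrow> 'c \<times> 'a set \<Rightarrow> 'c \<times> 'a set" where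
  "shift a y = coords (a \<otimes> point y)"

lemma coset_rep_mem: "Y \<in> rcosets H \<Longrightarrow> coset_rep Y \<in> Y"
  unfolding coset_rep_def using subgroup.rcosets_non_empty[OF subgroup_image]
  by (metis ex_in_conv someI)

lemma coset_rep_closed: "Y \<in> rcosets H \<Longrightarrow> coset_rep Y \<in> carrier A"
  using coset_rep_mem subgroup.rcosets_carrier[OF subgroup_image A.is_group] by blast

lemma rcos_coset_rep: "Y \<in> rcosets H \<Longrightarrow> H #> coset_rep Y = Y"
  using coset_rep_mem A.repr_independence[OF _ _ subgroup_image] by (auto simp: RCOSETS_def)

lemma mult_inv_coset_rep: "a \<in> carrier A \<Longrightarrow> a \<otimes> inv (coset_rep (H #> a)) \<in> H"
proof -
  assume a: "a \<in> carrier A"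
  then have Y: "H #> a \<in> rcosets H"
    by (rule rcos_in_rcosets)
  then have "a \<in> H #> coset_rep (H #> a)"
    using a A.rcos_self[OF a subgroup_image] by (simp add: rcos_coset_rep)
  then show ?thesis
    using subgroup.rcos_module_imp[OF subgroup_image A.is_group coset_rep_closed[OF Y]] by simp
qed

lemma coords_closed: "a \<in> carrier A \<Longrightarrow> coords a \<in> carrier C \<times> rcosets H"
  using mult_inv_coset_rep by (auto simp: coords_def rcos_in_rcosets inv_into_into)

lemma point_closed: "y \<in> carrier C \<times> rcosets H \<Longrightarrow> point y \<in> carrier A"
  by (auto simp: point_def f_closed coset_rep_closed)

lemma point_coords: "a \<in> carrier A \<Longrightarrow> point (coords a) = a"
  using mult_inv_coset_rep[of a] coset_rep_closed[OF rcos_in_rcosets, of a]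
  by (simp add: point_def coords_def f_inv_into_f A.m_assoc)

lemma coords_point: assumes "y \<in> carrier C \<times> rcosets H" shows "coords (point y) = y"
proof -
  obtain c Y where y: "y = (c, Y)" and c: "c \<in> carrier C" and Y: "Y \<in> rcosets H"
    using assms by auto
  have "H #> point y = (H #> f c) #> coset_rep Y"
    using y c Y by (simp add: point_def A.coset_mult_assoc f_closed coset_rep_closed image_subset)
  also have "\<dots> = Y"
    using c Y subgroup.rcos_const[OF subgroup_image A.is_group] by (simp add: rcos_coset_rep)
  finally show ?thesis
    using y c Y f_inj by (simp add: coords_def point_def A.m_assoc f_closed coset_rep_closed)
qed

lemma shift_closed: "a \<in> carrier A \<Longrightarrow> y \<in> carrier C \<times> rcosets H \<Longrightarrow> shift a y \<in> carrier C \<times> rcosets H"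
  by (simp add: shift_def coords_closed point_closed)

lemma shift_mult:
  "a \<in> carrier A \<Longrightarrow> b \<in> carrier A \<Longrightarrow> y \<in> carrier C \<times> rcosets H \<Longrightarrow>
    shift (a \<otimes> b) y = shift a (shift b y)"
  by (simp add: shift_def point_coords point_closed A.m_assoc)

lemma shift_one: "y \<in> carrier C \<times> rcosets H \<Longrightarrow> shift \<one> y = y"
  by (simp add: shift_def point_closed coords_point)

lemma shift_image:
  assumes c: "c \<in> carrier C" and y: "y \<in> carrier C \<times> rcosets H"
  shows "shift (f c) y = (c \<otimes>\<^bsub>C\<^esub> fst y, snd y)"
proof -
  have "f c \<otimes> point y = point (c \<otimes>\<^bsub>C\<^esub> fst y, snd y)"
    using c y f_hom by (auto simp: point_def hom_mult A.m_assoc f_closed coset_rep_closed)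
  then show ?thesis
    using c y by (auto simp: shift_def intro!: coords_point)
qed

lemma shift_inj: "a \<in> carrier A \<Longrightarrow> b \<in> carrier A \<Longrightarrow> y \<in> carrier C \<times> rcosets H \<Longrightarrow>
    shift a y = shift b y \<Longrightarrow> a = b"
  unfolding shift_def by (metis A.m_closed A.r_cancel point_closed point_coords)

definition shift_left :: "'a \<Rightarrow> 'c \<times> 'a set \<times> 'u \<Rightarrow> 'c \<times> 'a set \<times> 'u" where
  "shift_left a = (\<lambda>(c, t, u). (fst (shift a (c, t)), snd (shift a (c, t)), u))"

definition shift_right :: "'a \<Rightarrow> 'c \<times> 't \<times> 'a set \<Rightarrow> 'c \<times> 't \<times> 'a set" where
  "shift_right a = (\<lambda>(c, t, u). (fst (shift a (c, u)), t, snd (shift a (c, u))))"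

lemma shift_left_hom:
  "(\<lambda>a. restrict (shift_left a) (carrier C \<times> (rcosets H) \<times> U))
     \<in> hom A (BijGroup (carrier C \<times> (rcosets H) \<times> U))"
proof (rule A.restrict_action_hom)
  show "shift_left a x \<in> carrier C \<times> (rcosets H) \<times> U"
    if "a \<in> carrier A" "x \<in> carrier C \<times> (rcosets H) \<times> U" for a x
    using that shift_closed[of a "(fst x, fst (snd x))"] by (auto simp: shift_left_def case_prod_beta)
qed (auto simp: shift_left_def case_prod_beta shift_mult shift_one)

lemma shift_right_hom:
  "(\<lambda>a. restrict (shift_right a) (carrier C \<times> T \<times> (rcosets H)))
     \<in> hom A (BijGroup (carrier C \<times> T \<times> (rcosets H)))"
proof (rule A.restrict_action_hom)
  show "shift_right a x \<in> carrier C \<times> T \<times> (rcosets H)"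
    if "a \<in> carrier A" "x \<in> carrier C \<times> T \<times> (rcosets H)" for a x
    using that shift_closed[of a "(fst x, snd (snd x))"] by (auto simp: shift_right_def case_prod_beta)
qed (auto simp: shift_right_def case_prod_beta shift_mult shift_one)

end

text \<open>\<open>A\<close> and \<open>B\<close> act on \<open>C \<times> A/f(C) \<times> B/g(C)\<close> through the first two, resp. the first and
  last, coordinates; the actions agree on \<open>C\<close> and that of \<open>A\<close> is faithful.\<close>
theorem inj_on_amalg_inl:
  fixes A :: "('a, 'm) monoid_scheme" and B :: "('b, 'n) monoid_scheme" and C :: "('c, 'k) monoid_scheme"
  assumes A: "group A" and B: "group B" and C: "group C"
    and f: "f \<in> hom C A" "inj_on f (carrier C)" and g: "g \<in> hom C B" "inj_on g (carrier C)"
  shows "inj_on (amalg_inl A B C f g) (carrier A)"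
proof -
  interpret SA: subgroup_embedding A C f
    using A C f by (simp add: subgroup_embedding_def subgroup_embedding_axioms_def)
  interpret SB: subgroup_embedding B C g
    using B C g by (simp add: subgroup_embedding_def subgroup_embedding_axioms_def)
  interpret amalgam A B C f g
    using A B SA.f_closed SB.f_closed by (simp add: amalgam_def amalgam_axioms_def)
  let ?E = "carrier C \<times> (rcosets\<^bsub>A\<^esub> SA.H) \<times> (rcosets\<^bsub>B\<^esub> SB.H)"
  have "restrict (SA.shift_left (f c)) ?E = restrict (SB.shift_right (g c)) ?E" if "c \<in> carrier C" for c
    using that by (intro restrict_ext)
      (auto simp: SA.shift_left_def SB.shift_right_def case_prod_beta SA.shift_image SB.shift_image)
  then obtain \<psi> where \<psi>: "\<And>a. a \<in> carrier A \<Longrightarrow> \<psi> (amalg_inl A B C f g a) = restrict (SA.shift_left a) ?E"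
    using amalgamated_product_lift[OF group_BijGroup SA.shift_left_hom SB.shift_right_hom] by metis
  have base: "(\<one>\<^bsub>C\<^esub>, SA.H) \<in> carrier C \<times> rcosets\<^bsub>A\<^esub> SA.H" "SB.H \<in> rcosets\<^bsub>B\<^esub> SB.H"
    using subgroup.subgroup_in_rcosets[OF SA.subgroup_image A]
      subgroup.subgroup_in_rcosets[OF SB.subgroup_image B] by simp_all
  show ?thesis
  proof (rule inj_onI)
    fix a b assume a: "a \<in> carrier A" and b: "b \<in> carrier A"
      and "amalg_inl A B C f g a = amalg_inl A B C f g b"
    then have "restrict (SA.shift_left a) ?E (\<one>\<^bsub>C\<^esub>, SA.H, SB.H)
        = restrict (SA.shift_left b) ?E (\<one>\<^bsub>C\<^esub>, SA.H, SB.H)"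
      using \<psi> by metis
    then have "SA.shift a (\<one>\<^bsub>C\<^esub>, SA.H) = SA.shift b (\<one>\<^bsub>C\<^esub>, SA.H)"
      using base by (simp add: SA.shift_left_def prod_eq_iff)
    then show "a = b"
      using a b base SA.shift_inj by blast
  qed
qed

lemma infinite_amalgamated_product:
  assumes "group A" "group B" "group C" "f \<in> hom C A" "inj_on f (carrier C)"
    and "g \<in> hom C B" "inj_on g (carrier C)" and "infinite (carrier A)"
  shows "infinite (carrier (amalgamated_product A B C f g))"
proof -
  interpret amalgam A B C f g
    using assms by (simp add: amalgam_def amalgam_axioms_def hom_def)
  show ?thesis
    using inj_on_amalg_inl[OF assms(1-7)] hom_carrier[OF amalg_inl_hom] assms(8)
    by (metis finite_imageD finite_subset)
qed

section \<open>Cyclic groups and semidirect products\<close>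

lemma group_cyclic_group: "0 < p \<Longrightarrow> group (cyclic_group p)"
proof (rule groupI)
  fix x assume "0 < p" "x \<in> carrier (cyclic_group p)"
  then have "(p - x) mod p \<in> carrier (cyclic_group p)"
    and "(p - x) mod p \<otimes>\<^bsub>cyclic_group p\<^esub> x = \<one>\<^bsub>cyclic_group p\<^esub>"
    by (simp_all add: cyclic_group_def mod_add_left_eq)
  then show "\<exists>y\<in>carrier (cyclic_group p). y \<otimes>\<^bsub>cyclic_group p\<^esub> x = \<one>\<^bsub>cyclic_group p\<^esub>"
    by blast
qed (auto simp: cyclic_group_def mod_add_left_eq mod_add_right_eq add.assoc)

lemma cyclic_group_pow: "x [^]\<^bsub>cyclic_group p\<^esub> k = k * x mod p"
  by (induction k) (simp_all add: cyclic_group_def mod_add_right_eq add.commute)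

lemma one_cyclic_group [simp]: "\<one>\<^bsub>cyclic_group p\<^esub> = 0"
  by (simp add: cyclic_group_def)

lemma carrier_semidirect_product: "carrier (semidirect_product N H \<phi>) = carrier N \<times> carrier H"
  by (simp add: semidirect_product_def)

locale semidirect = N: group N + H: group H
  for N :: "('n, 'a) monoid_scheme" (structure) and H :: "('h, 'b) monoid_scheme" and \<phi> +
  assumes action: "\<phi> \<in> hom H (AutoGroup N)"
begin

abbreviation "G \<equiv> semidirect_product N H \<phi>"

lemma action_hom: "h \<in> carrier H \<Longrightarrow> \<phi> h \<in> hom N N"
  using hom_in_carrier[OF action] by (simp add: AutoGroup_def auto_def)

lemma action_closed: "h \<in> carrier H \<Longrightarrow> x \<in> carrier N \<Longrightarrow> \<phi> h x \<in> carrier N"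
  using action_hom by (rule hom_in_carrier)

lemma action_mult_right:
  "h \<in> carrier H \<Longrightarrow> x \<in> carrier N \<Longrightarrow> y \<in> carrier N \<Longrightarrow> \<phi> h (x \<otimes> y) = \<phi> h x \<otimes> \<phi> h y"
  using action_hom by (rule hom_mult)

lemma action_one_right: "h \<in> carrier H \<Longrightarrow> \<phi> h \<one> = \<one>"
  using group_hom.hom_one[of N N "\<phi> h"] action_hom
  by (simp add: group_hom_def group_hom_axioms_def N.is_group)

lemma action_mult:
  assumes "h1 \<in> carrier H" "h2 \<in> carrier H" "x \<in> carrier N"
  shows "\<phi> (h1 \<otimes>\<^bsub>H\<^esub> h2) x = \<phi> h1 (\<phi> h2 x)"
proof -
  have "\<phi> (h1 \<otimes>\<^bsub>H\<^esub> h2) = \<phi> h1 \<otimes>\<^bsub>AutoGroup N\<^esub> \<phi> h2"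
    using action assms by (simp add: hom_mult)
  also have "\<dots> = compose (carrier N) (\<phi> h1) (\<phi> h2)"
    using hom_in_carrier[OF action] assms by (simp add: AutoGroup_def BijGroup_def auto_def)
  finally show ?thesis
    using assms by (simp add: compose_def)
qed

lemma action_one:
  assumes "x \<in> carrier N" shows "\<phi> \<one>\<^bsub>H\<^esub> x = x"
proof -
  have "\<phi> \<one>\<^bsub>H\<^esub> = \<one>\<^bsub>AutoGroup N\<^esub>"
    using group_hom.hom_one[of H "AutoGroup N" \<phi>] action
    by (simp add: group_hom_def group_hom_axioms_def H.is_group N.AutoGroup)
  then show ?thesis
    using assms by (simp add: AutoGroup_def BijGroup_def)
qed

lemma group_semidirect_product: "group G"
proof (rule groupI)
  fix x y z assume "x \<in> carrier G" "y \<in> carrier G" "z \<in> carrier G"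
  then show "x \<otimes>\<^bsub>G\<^esub> y \<otimes>\<^bsub>G\<^esub> z = x \<otimes>\<^bsub>G\<^esub> (y \<otimes>\<^bsub>G\<^esub> z)"
    by (auto simp: semidirect_product_def action_closed action_mult_right action_mult
        N.m_assoc H.m_assoc)
next
  fix x assume "x \<in> carrier G"
  then obtain n h where x: "x = (n, h)" "n \<in> carrier N" "h \<in> carrier H"
    by (auto simp: semidirect_product_def)
  then have "(\<phi> (inv\<^bsub>H\<^esub> h) (inv n), inv\<^bsub>H\<^esub> h) \<in> carrier G"
    and "(\<phi> (inv\<^bsub>H\<^esub> h) (inv n), inv\<^bsub>H\<^esub> h) \<otimes>\<^bsub>G\<^esub> x = \<one>\<^bsub>G\<^esub>"
    by (simp_all add: semidirect_product_def action_closed flip: action_mult_right)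
      (simp add: action_one_right)
  then show "\<exists>y\<in>carrier G. y \<otimes>\<^bsub>G\<^esub> x = \<one>\<^bsub>G\<^esub>"
    by blast
qed (auto simp: semidirect_product_def action_closed action_one)

lemma semidirect_inl_hom: "(\<lambda>x. (x, \<one>\<^bsub>H\<^esub>)) \<in> hom N G"
  by (rule homI) (simp_all add: semidirect_product_def action_one)

lemma semidirect_inr_hom: "(\<lambda>h. (\<one>, h)) \<in> hom H G"
  by (rule homI) (simp_all add: semidirect_product_def action_one_right)

lemma semidirect_commutator:
  assumes h: "h \<in> carrier H" and x: "x \<in> carrier N"
  shows "(\<one>, h) \<otimes>\<^bsub>G\<^esub> (x, \<one>\<^bsub>H\<^esub>) \<otimes>\<^bsub>G\<^esub> inv\<^bsub>G\<^esub> (\<one>, h) \<otimes>\<^bsub>G\<^esub> inv\<^bsub>G\<^esub> (x, \<one>\<^bsub>H\<^esub>)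
       = (\<phi> h x \<otimes> inv x, \<one>\<^bsub>H\<^esub>)"
proof -
  have G: "group G"
    by (rule group_semidirect_product)
  have "inv\<^bsub>G\<^esub> (\<one>, h) = (\<one>, inv\<^bsub>H\<^esub> h)" and "inv\<^bsub>G\<^esub> (x, \<one>\<^bsub>H\<^esub>) = (inv x, \<one>\<^bsub>H\<^esub>)"
    using group_hom.hom_inv[of H G "\<lambda>h. (\<one>, h)" h] group_hom.hom_inv[of N G "\<lambda>x. (x, \<one>\<^bsub>H\<^esub>)" x]
      semidirect_inr_hom semidirect_inl_hom h x G
    by (simp_all add: group_hom_def group_hom_axioms_def N.is_group H.is_group)
  then show ?thesis
    using h x by (simp add: semidirect_product_def action_closed action_one_right action_one)
qed

text \<open>As \<open>N\<close> has exponent \<open>k\<close>, the commutator \<open>(\<phi> h x \<otimes> inv x, 1)\<close> is a torsion element.\<close>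
lemma fixed_if_commutator_in_torsion_free:
  fixes k :: nat
  assumes K: "group K" and \<iota>: "\<iota> \<in> hom G K" "inj_on \<iota> (carrier G)"
    and T: "torsion_free K T" and k: "0 < k" "\<And>y. y \<in> carrier N \<Longrightarrow> y [^] k = \<one>"
    and h: "h \<in> carrier H" and x: "x \<in> carrier N"
    and comm: "\<iota> (\<one>, h) \<otimes>\<^bsub>K\<^esub> \<iota> (x, \<one>\<^bsub>H\<^esub>) \<otimes>\<^bsub>K\<^esub> inv\<^bsub>K\<^esub> \<iota> (\<one>, h) \<otimes>\<^bsub>K\<^esub> inv\<^bsub>K\<^esub> \<iota> (x, \<one>\<^bsub>H\<^esub>) \<in> T"
  shows "\<phi> h x = x"
proof -
  interpret G: group G
    by (rule group_semidirect_product)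
  interpret \<iota>: group_hom G K \<iota>
    using K \<iota>(1) by (simp add: group_hom_def group_hom_axioms_def G.is_group)
  interpret inl: group_hom N G "\<lambda>y. (y, \<one>\<^bsub>H\<^esub>)"
    using semidirect_inl_hom by (simp add: group_hom_def group_hom_axioms_def G.is_group N.is_group)
  define y where "y = \<phi> h x \<otimes> inv x"
  have y: "y \<in> carrier N"
    using h x by (simp add: y_def action_closed)
  have elems: "(\<one>, h) \<in> carrier G" "(x, \<one>\<^bsub>H\<^esub>) \<in> carrier G"
    using h x by (simp_all add: carrier_semidirect_product)
  have "\<iota> (y, \<one>\<^bsub>H\<^esub>)
      = \<iota> ((\<one>, h) \<otimes>\<^bsub>G\<^esub> (x, \<one>\<^bsub>H\<^esub>) \<otimes>\<^bsub>G\<^esub> inv\<^bsub>G\<^esub> (\<one>, h) \<otimes>\<^bsub>G\<^esub> inv\<^bsub>G\<^esub> (x, \<one>\<^bsub>H\<^esub>))"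
    by (simp only: y_def semidirect_commutator[OF h x])
  also have "\<dots> = \<iota> (\<one>, h) \<otimes>\<^bsub>K\<^esub> \<iota> (x, \<one>\<^bsub>H\<^esub>) \<otimes>\<^bsub>K\<^esub> inv\<^bsub>K\<^esub> \<iota> (\<one>, h) \<otimes>\<^bsub>K\<^esub> inv\<^bsub>K\<^esub> \<iota> (x, \<one>\<^bsub>H\<^esub>)"
    using elems by simp
  finally have "\<iota> (y, \<one>\<^bsub>H\<^esub>) \<in> T"
    using comm by simp
  moreover have "\<iota> (y, \<one>\<^bsub>H\<^esub>) [^]\<^bsub>K\<^esub> k = \<one>\<^bsub>K\<^esub>"
  proof -
    have "\<iota> (y, \<one>\<^bsub>H\<^esub>) [^]\<^bsub>K\<^esub> k = \<iota> ((y, \<one>\<^bsub>H\<^esub>) [^]\<^bsub>G\<^esub> k)"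
      using inl.hom_closed[OF y] by (rule \<iota>.hom_nat_pow[symmetric])
    also have "\<dots> = \<iota> (y [^] k, \<one>\<^bsub>H\<^esub>)"
      using y by (simp add: inl.hom_nat_pow)
    finally show ?thesis
      using y k(2) by simp
  qed
  ultimately have "\<iota> (y, \<one>\<^bsub>H\<^esub>) = \<iota> (\<one>, \<one>\<^bsub>H\<^esub>)"
    using T k(1) by (simp add: torsion_free_def)
  then have "(y, \<one>\<^bsub>H\<^esub>) = (\<one>, \<one>\<^bsub>H\<^esub>)"
    by (rule inj_onD[OF \<iota>(2) _ inl.hom_closed[OF y] inl.hom_closed[OF N.one_closed]])
  then have "\<phi> h x \<otimes> inv x = \<one>"
    unfolding y_def by (metis prod.inject)
  then show ?thesis
    using N.inv_equality[of "\<phi> h x" "inv x"] h x by (simp add: action_closed)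
qed

theorem not_virtually_torsion_free_amalgam:
  fixes k :: nat
  assumes C: "group C" and i: "i \<in> hom C H" "inj_on i (carrier C)"
    and j: "j \<in> hom C H" "inj_on j (carrier C)"
    and simple: "simple_grp (amalgamated_product H H C i j)" and inf: "infinite (carrier H)"
    and k: "0 < k" "\<And>y. y \<in> carrier N \<Longrightarrow> y [^] k = \<one>"
    and h: "h \<in> carrier H" and x: "x \<in> carrier N" and moved: "\<phi> h x \<noteq> x"
  shows "\<not> virtually_torsion_free (amalgamated_product G G C (\<lambda>c. (\<one>, i c)) (\<lambda>c. (\<one>, j c)))"
proof
  let ?\<Lambda> = "amalgamated_product H H C i j"
  let ?\<Gamma> = "amalgamated_product G G C (\<lambda>c. (\<one>, i c)) (\<lambda>c. (\<one>, j c))"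
  let ?\<iota> = "amalg_inl G G C (\<lambda>c. (\<one>, i c)) (\<lambda>c. (\<one>, j c))"
  assume "virtually_torsion_free ?\<Gamma>"
  then obtain T where T: "subgroup T ?\<Gamma>" "finite (rcosets\<^bsub>?\<Gamma>\<^esub> T)" "torsion_free ?\<Gamma> T"
    by (auto simp: virtually_torsion_free_def)
  have fi: "(\<lambda>c. (\<one>, i c)) \<in> hom C G" "inj_on (\<lambda>c. (\<one>, i c)) (carrier C)"
    and fj: "(\<lambda>c. (\<one>, j c)) \<in> hom C G" "inj_on (\<lambda>c. (\<one>, j c)) (carrier C)"
    using Group.hom_compose[OF i(1) semidirect_inr_hom] Group.hom_compose[OF j(1) semidirect_inr_hom]
      i(2) j(2)
    by (simp_all add: comp_def inj_on_def)
  interpret \<Lambda>: amalgam H H C i j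
    using i(1) j(1) by (simp add: amalgam_def amalgam_axioms_def hom_def H.is_group)
  interpret \<Gamma>: amalgam G G C "\<lambda>c. (\<one>, i c)" "\<lambda>c. (\<one>, j c)"
    using group_semidirect_product fi fj by (simp add: amalgam_def amalgam_axioms_def hom_def)
  obtain \<psi> where \<psi>: "\<psi> \<in> hom ?\<Lambda> ?\<Gamma>"
    and \<psi>_inl: "\<And>h. h \<in> carrier H \<Longrightarrow> \<psi> (amalg_inl H H C i j h) = ?\<iota> (\<one>, h)"
    by (rule \<Lambda>.amalgamated_product_map[OF \<Gamma>.amalgam_axioms semidirect_inr_hom semidirect_inr_hom])
      simp_all
  have "\<psi> (amalg_inl H H C i j h) \<otimes>\<^bsub>?\<Gamma>\<^esub> ?\<iota> (x, \<one>\<^bsub>H\<^esub>)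
      \<otimes>\<^bsub>?\<Gamma>\<^esub> inv\<^bsub>?\<Gamma>\<^esub> \<psi> (amalg_inl H H C i j h) \<otimes>\<^bsub>?\<Gamma>\<^esub> inv\<^bsub>?\<Gamma>\<^esub> ?\<iota> (x, \<one>\<^bsub>H\<^esub>) \<in> T"
    by (rule group.commutator_mem_finite_index_subgroup[OF \<Gamma>.group_amalgamated_product T(1,2) simple
          infinite_amalgamated_product[OF H.is_group H.is_group C i j inf] \<psi>
          hom_in_carrier[OF \<Lambda>.amalg_inl_hom h]
          hom_in_carrier[OF \<Gamma>.amalg_inl_hom hom_in_carrier[OF semidirect_inl_hom x]]])
  then have comm: "?\<iota> (\<one>, h) \<otimes>\<^bsub>?\<Gamma>\<^esub> ?\<iota> (x, \<one>\<^bsub>H\<^esub>)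
      \<otimes>\<^bsub>?\<Gamma>\<^esub> inv\<^bsub>?\<Gamma>\<^esub> ?\<iota> (\<one>, h) \<otimes>\<^bsub>?\<Gamma>\<^esub> inv\<^bsub>?\<Gamma>\<^esub> ?\<iota> (x, \<one>\<^bsub>H\<^esub>) \<in> T"
    by (simp only: \<psi>_inl[OF h])
  have "\<phi> h x = x"
    by (rule fixed_if_commutator_in_torsion_free[OF \<Gamma>.group_amalgamated_product \<Gamma>.amalg_inl_hom
          inj_on_amalg_inl[OF group_semidirect_product group_semidirect_product C fi fj] T(3) k h x comm])
  with moved show False ..
qed

end

theorem proposition4p2:
  fixes V1 :: "'v set" and E1 :: "'v \<Rightarrow> 'v \<Rightarrow> bool"
    and V2 :: "'w set" and E2 :: "'w \<Rightarrow> 'w \<Rightarrow> bool"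
    and n m p :: nat
    and i j :: "(nat \<times> bool) list \<Rightarrow> (nat \<times> bool) list"
    and \<rho> :: "((((nat \<times> bool) list + (nat \<times> bool) list) \<times> bool) list set) \<Rightarrow> ('v \<Rightarrow> 'v) \<times> ('w \<Rightarrow> 'w)"
    and \<phi> :: "(nat \<times> bool) list \<Rightarrow> nat \<Rightarrow> nat"
  assumes T1: "is_tree V1 E1" "locally_finite V1 E1"
    and T2: "is_tree V2 E2" "locally_finite V2 E2"
    and i_emb: "i \<in> hom (F m) (F n)" "inj_on i (carrier (F m))"
    and j_emb: "j \<in> hom (F m) (F n)" "inj_on j (carrier (F m))"
    and simple: "simple_grp (amalgamated_product (F n) (F n) (F m) i j)"
    and lattice: "\<rho> \<in> hom (amalgamated_product (F n) (F n) (F m) i j)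
                          (tree_aut V1 E1 \<times>\<times> tree_aut V2 E2)"
                 "inj_on \<rho> (carrier (amalgamated_product (F n) (F n) (F m) i j))"
                 "uniform_lattice (tree_aut V1 E1 \<times>\<times> tree_aut V2 E2)
                    (prod_topology (tree_aut_topology V1 E1) (tree_aut_topology V2 E2))
                    (\<rho> ` carrier (amalgamated_product (F n) (F n) (F m) i j))"
    and p: "Factorial_Ring.prime p"
    and act: "\<phi> \<in> hom (F n) (AutoGroup (cyclic_group p))"
    and nontriv: "\<exists>h\<in>carrier (F n). \<exists>x\<in>carrier (cyclic_group p). \<phi> h x \<noteq> x"
  shows "\<not> virtually_torsion_free
           (amalgamated_product
              (semidirect_product (cyclic_group p) (F n) \<phi>)
              (semidirect_product (cyclic_group p) (F n) \<phi>)
              (F m)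
              (\<lambda>c. (0, i c)) (\<lambda>c. (0, j c)))"
proof -
  obtain h x where h: "h \<in> carrier (F n)" and x: "x \<in> carrier (cyclic_group p)"
    and moved: "\<phi> h x \<noteq> x"
    using nontriv by blast
  have p0: "0 < p"
    using p by (simp add: prime_gt_0_nat)
  interpret semidirect "cyclic_group p" "F n" \<phi>
    using group_cyclic_group[OF p0] group_free_group act
    by (simp add: semidirect_def semidirect_axioms_def)
  obtain a where "a \<in> set h"
    using moved action_one[OF x] by (cases h) auto
  then have inf: "infinite (carrier (F n))"
    using h by (intro infinite_free_group[of "fst a"]) (auto simp: free_group_def)
  have exponent: "\<And>y. y \<in> carrier (cyclic_group p) \<Longrightarrow> y [^]\<^bsub>cyclic_group p\<^esub> p = \<one>\<^bsub>cyclic_group p\<^esub>"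
    by (simp add: cyclic_group_pow)
  show ?thesis
    using not_virtually_torsion_free_amalgam[OF group_free_group i_emb j_emb simple inf p0 exponent h x moved]
    unfolding one_cyclic_group .
qed

end
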